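(* Let $A\in\mathbb{R}^{n\times n}$ be an invertible M-matrix, partitioned as $A=\begin{bmatrix} A_{11} & A_{12}\\ A_{21} & A_{22}\end{bmatrix}$ with $A_{11}\in\mathbb{R}^{k\times k}$ and $A_{22}\in\mathbb{R}^{(n-k)\times(n-k)}$. Let $M_{11},N_{11}\in\mathbb{R}^{k\times k}$ and $M_{22},N_{22}\in\mathbb{R}^{(n-k)\times(n-k)}$, and suppose that both pairs \[ M = \begin{bmatrix} M_{11} & 0\\ A_{21} & M_{22}\end{bmatrix},\quad N = \begin{bmatrix} N_{11} & -A_{12}\\ 0 & N_{22}\end{bmatrix} \qquad\text{and}\qquad \hat{M} = \begin{bmatrix} M_{11} & A_{12}\\ 0 & M_{22}\end{bmatrix},\quad \hat{N} = \begin{bmatrix} N_{11} & 0\\ -A_{21} & N_{22}\end{bmatrix} \] are regular splittings of $A$. Then $\hat{M}^{-1}\hat{N}$ and $M^{-1}N$ have the same eigenvalues, and hence the same spectral radius.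
   Context: A regular splitting of $A$ is a pair $(M,N)$ with $M$ an invertible M-matrix, $N\geq 0$ entrywise, and $A=M-N$. The spectral radius $\rho(P)$ is the maximum modulus of the eigenvalues of $P$. *)

theory Defs
  imports "Jordan_Normal_Form.Spectral_Radius"
begin

text \<open>Real matrices are \<open>real mat\<close> (Jordan_Normal_Form); eigenvalues and the spectral
  radius are taken over the complex numbers after embedding.\<close>

definition cmat :: "real mat \<Rightarrow> complex mat" where
  "cmat A = map_mat complex_of_real A"

definition nonneg_mat :: "real mat \<Rightarrow> bool" where
  "nonneg_mat A \<longleftrightarrow> (\<forall>i < dim_row A. \<forall>j < dim_col A. A $$ (i, j) \<ge> 0)"

definition M_matrix :: "real mat \<Rightarrow> bool" where
  "M_matrix A \<longleftrightarrow> square_mat A \<and>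
     (\<exists>s B. B \<in> carrier_mat (dim_row A) (dim_row A) \<and> nonneg_mat B \<and>
        A = s \<cdot>\<^sub>m 1\<^sub>m (dim_row A) - B \<and> s \<ge> spectral_radius (cmat B))"

definition invertible_M_matrix :: "real mat \<Rightarrow> bool" where
  "invertible_M_matrix A \<longleftrightarrow> M_matrix A \<and> invertible_mat A"

definition regular_splitting :: "real mat \<Rightarrow> real mat \<Rightarrow> real mat \<Rightarrow> bool" where
  "regular_splitting A M N \<longleftrightarrow> invertible_M_matrix M \<and> nonneg_mat N \<and>
     N \<in> carrier_mat (dim_row M) (dim_col M) \<and> A = M - N"

definition mat_inv :: "real mat \<Rightarrow> real mat" where
  "mat_inv A = (SOME B. B \<in> carrier_mat (dim_row A) (dim_row A) \<and>
                        A * B = 1\<^sub>m (dim_row A) \<and> B * A = 1\<^sub>m (dim_row A))"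

end

theory Submission
  imports Defs
begin

text \<open>\<open>\<lambda>\<close> is an eigenvalue of \<open>M\<^sup>-\<^sup>1 N\<close> iff \<open>det (N - \<lambda> M) = 0\<close>. The two pencils
  \<open>N - \<lambda> M\<close> and \<open>N\<^sup>^ - \<lambda> M\<^sup>^\<close> have the same diagonal blocks \<open>N\<^sub>i\<^sub>i - \<lambda> M\<^sub>i\<^sub>i\<close> and
  off-diagonal blocks \<open>-A\<^sub>1\<^sub>2, -\<lambda> A\<^sub>2\<^sub>1\<close> resp. \<open>-\<lambda> A\<^sub>1\<^sub>2, -A\<^sub>2\<^sub>1\<close>. For \<open>\<lambda> \<noteq> 0\<close>,
  conjugating by \<open>diag(I, \<lambda> I)\<close> moves the factor \<open>\<lambda>\<close> from one off-diagonal block to the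
  other without changing the determinant; for \<open>\<lambda> = 0\<close> both pencils are block triangular
  with the same diagonal. Hence the characteristic equations, and so the spectra, agree.\<close>

lemma det_four_block_mat_smult_off_diag:
  fixes A B C D :: "'a :: field mat" and l :: 'a
  assumes A: "A \<in> carrier_mat k k" and B: "B \<in> carrier_mat k m"
    and C: "C \<in> carrier_mat m k" and D: "D \<in> carrier_mat m m"
  shows "det (four_block_mat A B (l \<cdot>\<^sub>m C) D) = det (four_block_mat A (l \<cdot>\<^sub>m B) C D)"
proof (cases "l = 0")
  case True
  have "det (four_block_mat A B (l \<cdot>\<^sub>m C) D) = det A * det D"
    using True C by (intro det_four_block_mat_lower_left_zero[OF A B _ D]) auto
  moreover have "det (four_block_mat A (l \<cdot>\<^sub>m B) C D) = det A * det D"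
    using True B by (intro det_four_block_mat_upper_right_zero[OF A _ C D]) auto
  ultimately show ?thesis by simp
next
  case False
  define S where "S c = four_block_mat (1\<^sub>m k) (0\<^sub>m k m) (0\<^sub>m m k) (c \<cdot>\<^sub>m 1\<^sub>m m)" for c :: 'a
  let ?Y = "four_block_mat A (l \<cdot>\<^sub>m B) C D"
  have S_carrier: "S c \<in> carrier_mat (k + m) (k + m)" for c
    unfolding S_def by auto
  have det_S: "det (S c) = c ^ m" for c
    unfolding S_def by (subst det_four_block_mat_upper_right_zero[of _ k _ m]) auto
  have "S l * ?Y = four_block_mat A (l \<cdot>\<^sub>m B) (l \<cdot>\<^sub>m C) (l \<cdot>\<^sub>m D)"
    unfolding S_def using assms
    by (subst mult_four_block_mat) (auto simp: mult_smult_assoc_mat[of _ m m])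
  also have "\<dots> * S (1 / l) = four_block_mat A B (l \<cdot>\<^sub>m C) D"
    unfolding S_def using assms False
    by (subst mult_four_block_mat) (auto simp: mult_smult_distrib[of _ _ m] smult_smult_assoc)
  finally have conj: "S l * ?Y * S (1 / l) = four_block_mat A B (l \<cdot>\<^sub>m C) D" .
  have Y: "?Y \<in> carrier_mat (k + m) (k + m)"
    using assms by auto
  have "det (S l * ?Y * S (1 / l)) = det (S l) * det ?Y * det (S (1 / l))"
    using det_mult[OF mult_carrier_mat[OF S_carrier Y] S_carrier] det_mult[OF S_carrier Y]
    by simp
  also have "\<dots> = det ?Y"
    using False by (simp add: det_S power_divide)
  finally show ?thesis
    using conj by simp
qed

lemma det_block_triangular_pencils_eq:
  fixes M11 N11 M22 N22 B C :: "'a :: field mat" and l :: 'a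
  assumes "M11 \<in> carrier_mat k k" "N11 \<in> carrier_mat k k"
    and "M22 \<in> carrier_mat m m" "N22 \<in> carrier_mat m m"
    and "B \<in> carrier_mat k m" "C \<in> carrier_mat m k"
  shows "det (four_block_mat N11 (- B) (0\<^sub>m m k) N22 - l \<cdot>\<^sub>m four_block_mat M11 (0\<^sub>m k m) C M22)
       = det (four_block_mat N11 (0\<^sub>m k m) (- C) N22 - l \<cdot>\<^sub>m four_block_mat M11 B (0\<^sub>m m k) M22)"
proof -
  let ?X11 = "N11 - l \<cdot>\<^sub>m M11" and ?X22 = "N22 - l \<cdot>\<^sub>m M22"
  have "four_block_mat N11 (- B) (0\<^sub>m m k) N22 - l \<cdot>\<^sub>m four_block_mat M11 (0\<^sub>m k m) C M22
      = four_block_mat ?X11 (- B) (l \<cdot>\<^sub>m (- C)) ?X22"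
    using assms by (intro eq_matI) auto
  moreover have "four_block_mat N11 (0\<^sub>m k m) (- C) N22 - l \<cdot>\<^sub>m four_block_mat M11 B (0\<^sub>m m k) M22
      = four_block_mat ?X11 (l \<cdot>\<^sub>m (- B)) (- C) ?X22"
    using assms by (intro eq_matI) auto
  moreover have "?X11 \<in> carrier_mat k k" "?X22 \<in> carrier_mat m m" "- B \<in> carrier_mat k m"
    "- C \<in> carrier_mat m k"
    using assms by auto
  ultimately show ?thesis
    using det_four_block_mat_smult_off_diag by metis
qed

lemma spectrum_mult_left_inverse:
  fixes L M N :: "'a :: field mat"
  assumes M: "M \<in> carrier_mat n n" and L: "L \<in> carrier_mat n n" and N: "N \<in> carrier_mat n n"
    and LM: "L * M = 1\<^sub>m n"
  shows "spectrum (L * N) = {l. det (N - l \<cdot>\<^sub>m M) = 0}"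
proof -
  have "det L * det M = 1"
    using det_mult[OF L M] LM by simp
  then have det_L: "det L \<noteq> 0"
    by auto
  have char: "char_matrix (L * N) l = L * (N - l \<cdot>\<^sub>m M)" for l
  proof -
    have "L * (N - l \<cdot>\<^sub>m M) = L * N - L * (l \<cdot>\<^sub>m M)"
      using M by (intro mult_minus_distrib_mat[OF L N]) auto
    also have "L * (l \<cdot>\<^sub>m M) = l \<cdot>\<^sub>m 1\<^sub>m n"
      using mult_smult_distrib[OF L M] LM by simp
    finally show ?thesis
      unfolding char_matrix_def using L N by (intro eq_matI) auto
  qed
  have "eigenvalue (L * N) l \<longleftrightarrow> det (N - l \<cdot>\<^sub>m M) = 0" for l
  proof -
    have "N - l \<cdot>\<^sub>m M \<in> carrier_mat n n"
      using M N by auto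
    then show ?thesis
      using eigenvalue_det[OF mult_carrier_mat[OF L N]] det_mult[OF L] char det_L by auto
  qed
  then show ?thesis
    unfolding spectrum_def by auto
qed

lemma mat_inv_inverse:
  assumes M: "M \<in> carrier_mat n n" and "invertible_mat M"
  shows "mat_inv M \<in> carrier_mat n n" "M * mat_inv M = 1\<^sub>m n" "mat_inv M * M = 1\<^sub>m n"
proof -
  have dim_M: "dim_row M = n" "dim_col M = n"
    using M by auto
  obtain B where MB: "M * B = 1\<^sub>m n" and BM: "B * M = 1\<^sub>m (dim_row B)"
    using \<open>invertible_mat M\<close> unfolding invertible_mat_def inverts_mat_def dim_M by blast
  have "dim_row B = n"
    using arg_cong[OF BM, of dim_col] dim_M by simp
  moreover have "dim_col B = n"
    using arg_cong[OF MB, of dim_col] by simp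
  ultimately have "B \<in> carrier_mat n n \<and> M * B = 1\<^sub>m n \<and> B * M = 1\<^sub>m n"
    using MB BM by auto
  then have "mat_inv M \<in> carrier_mat n n \<and> M * mat_inv M = 1\<^sub>m n \<and> mat_inv M * M = 1\<^sub>m n"
    unfolding mat_inv_def dim_M by (rule someI)
  then show "mat_inv M \<in> carrier_mat n n" "M * mat_inv M = 1\<^sub>m n" "mat_inv M * M = 1\<^sub>m n"
    by auto
qed

lemma cmat_carrier_mat: "A \<in> carrier_mat nr nc \<Longrightarrow> cmat A \<in> carrier_mat nr nc"
  unfolding cmat_def by auto

lemma cmat_mult:
  "A \<in> carrier_mat nr n \<Longrightarrow> B \<in> carrier_mat n nc \<Longrightarrow> cmat (A * B) = cmat A * cmat B"
  unfolding cmat_def by (rule of_real_hom.mat_hom_mult)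

lemma cmat_one: "cmat (1\<^sub>m n) = 1\<^sub>m n"
  unfolding cmat_def by (rule of_real_hom.mat_hom_one)

lemma spectrum_cmat_mat_inv_mult:
  assumes M: "M \<in> carrier_mat n n" and N: "N \<in> carrier_mat n n" and "invertible_mat M"
  shows "spectrum (cmat (mat_inv M * N)) = {l. det (cmat N - l \<cdot>\<^sub>m cmat M) = 0}"
proof -
  note inv = mat_inv_inverse[OF M \<open>invertible_mat M\<close>]
  have "cmat (mat_inv M) * cmat M = 1\<^sub>m n"
    using inv M by (simp flip: cmat_mult add: cmat_one)
  then show ?thesis
    using inv N cmat_mult spectrum_mult_left_inverse[OF cmat_carrier_mat[OF M]
        cmat_carrier_mat[OF inv(1)] cmat_carrier_mat[OF N]] by simp
qed

theorem lemma2: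
  fixes n k :: nat and A11 A12 A21 A22 M11 N11 M22 N22 :: "real mat"
  assumes "k \<le> n"
    and "A11 \<in> carrier_mat k k" and "A12 \<in> carrier_mat k (n - k)"
    and "A21 \<in> carrier_mat (n - k) k" and "A22 \<in> carrier_mat (n - k) (n - k)"
    and "M11 \<in> carrier_mat k k" and "N11 \<in> carrier_mat k k"
    and "M22 \<in> carrier_mat (n - k) (n - k)" and "N22 \<in> carrier_mat (n - k) (n - k)"
    and "invertible_M_matrix (four_block_mat A11 A12 A21 A22)"
    and "regular_splitting (four_block_mat A11 A12 A21 A22)
           (four_block_mat M11 (0\<^sub>m k (n - k)) A21 M22)
           (four_block_mat N11 (- A12) (0\<^sub>m (n - k) k) N22)"
    and "regular_splitting (four_block_mat A11 A12 A21 A22)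
           (four_block_mat M11 A12 (0\<^sub>m (n - k) k) M22)
           (four_block_mat N11 (0\<^sub>m k (n - k)) (- A21) N22)"
  shows "spectrum (cmat (mat_inv (four_block_mat M11 A12 (0\<^sub>m (n - k) k) M22)
                          * four_block_mat N11 (0\<^sub>m k (n - k)) (- A21) N22))
       = spectrum (cmat (mat_inv (four_block_mat M11 (0\<^sub>m k (n - k)) A21 M22)
                          * four_block_mat N11 (- A12) (0\<^sub>m (n - k) k) N22))
    \<and> spectral_radius (cmat (mat_inv (four_block_mat M11 A12 (0\<^sub>m (n - k) k) M22)
                          * four_block_mat N11 (0\<^sub>m k (n - k)) (- A21) N22))
       = spectral_radius (cmat (mat_inv (four_block_mat M11 (0\<^sub>m k (n - k)) A21 M22)
                          * four_block_mat N11 (- A12) (0\<^sub>m (n - k) k) N22))"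
proof -
  let ?M = "four_block_mat M11 (0\<^sub>m k (n - k)) A21 M22"
  let ?N = "four_block_mat N11 (- A12) (0\<^sub>m (n - k) k) N22"
  let ?Mh = "four_block_mat M11 A12 (0\<^sub>m (n - k) k) M22"
  let ?Nh = "four_block_mat N11 (0\<^sub>m k (n - k)) (- A21) N22"
  note blocks = assms(2-9)
  have carriers: "?M \<in> carrier_mat n n" "?N \<in> carrier_mat n n"
    "?Mh \<in> carrier_mat n n" "?Nh \<in> carrier_mat n n"
    using blocks \<open>k \<le> n\<close> by auto
  have "invertible_mat ?M" "invertible_mat ?Mh"
    using assms(11,12) unfolding regular_splitting_def invertible_M_matrix_def by auto
  have pencils: "det (cmat ?N - l \<cdot>\<^sub>m cmat ?M) = det (cmat ?Nh - l \<cdot>\<^sub>m cmat ?Mh)" for l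
  proof -
    have "cmat ?M = four_block_mat (cmat M11) (0\<^sub>m k (n - k)) (cmat A21) (cmat M22)"
      "cmat ?N = four_block_mat (cmat N11) (- cmat A12) (0\<^sub>m (n - k) k) (cmat N22)"
      "cmat ?Mh = four_block_mat (cmat M11) (cmat A12) (0\<^sub>m (n - k) k) (cmat M22)"
      "cmat ?Nh = four_block_mat (cmat N11) (0\<^sub>m k (n - k)) (- cmat A21) (cmat N22)"
      using blocks by (auto intro!: eq_matI simp: cmat_def)
    then show ?thesis
      using det_block_triangular_pencils_eq[OF blocks(5-8,2,3)[THEN cmat_carrier_mat]] by simp
  qed
  have "spectrum (cmat (mat_inv ?Mh * ?Nh)) = spectrum (cmat (mat_inv ?M * ?N))"
    using carriers \<open>invertible_mat ?M\<close> \<open>invertible_mat ?Mh\<close>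
    by (simp add: spectrum_cmat_mat_inv_mult[of _ n] pencils)
  then show ?thesis
    unfolding spectral_radius_def by simp
qed

end
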